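(* Let $A,B$, the generalized cosines $c_1,\dots,c_n$, $H$, $S$, $P_S$, $P=\psi_d(S)$ and $\Delta_{\min}$ be as described in the context, for an interval $[c_{\min},c_{\max}]\subset[0,1]$ and series degree $d$. Then $$|\mathrm{tr}(P_S)-\mathrm{tr}(P)|\le\frac{n\pi^6}{2(d+2)^3\Delta_{\min}^4}.$$
   Context: $A\in\mathbb{R}^{m_1\times n}$, $B\in\mathbb{R}^{m_2\times n}$, $m_1+m_2\ge n$, $[A^T,B^T]^T$ of full column rank. GSVD: $U^TAX=\Sigma_A$, $V^TBX=\Sigma_B$ with $X$ nonsingular, $U,V$ orthogonal, $\Sigma_A^T\Sigma_A=\mathrm{diag}(c_1^2,\dots,c_n^2)$, $\Sigma_B^T\Sigma_B=\mathrm{diag}(s_1^2,\dots,s_n^2)$, $c_i,s_i\ge0$, $c_i^2+s_i^2=1$ (values $c_i=0$ and $c_i=1$ correspond to $\mathcal N(A)$ and $\mathcal N(B)$). $H=A^TA+B^TB$, $X^THX=I$, $S=H^{-1}(A^TA-B^TB)=X(2\Sigma_A^T\Sigma_A-I)X^{-1}$. $P_S=X_{in}X_{in}^TH+\frac12X_eX_e^TH$, where $X_{in}$ (resp. $X_e$) consists of the columns $x_i$ of $X$ with $c_i\in(c_{\min},c_{\max})$ (resp. $c_i\in\{c_{\min},c_{\max}\}$). With $l(z)=2z^2-1$, $\alpha=\arccos(l(c_{\min}))$, $\beta=\arccos(l(c_{\max}))$, $\eta_0=(\alpha-\beta)/\pi$, $\eta_j=2(\sin(j\alpha)-\sin(j\beta))/(j\pi)$,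 $\rho_{j,d}=\frac{(d+2-j)\sin\frac{\pi}{d+2}\cos\frac{j\pi}{d+2}+\cos\frac{\pi}{d+2}\sin\frac{j\pi}{d+2}}{(d+2)\sin\frac{\pi}{d+2}}$, let $\psi_d(x)=\sum_{j=0}^d\rho_{j,d}\eta_jT_j(x)$ ($T_j$ Chebyshev polynomials) and $P=\psi_d(S)$. $\Delta_{\min}=\min\{\Delta_{il},\Delta_{ir},\Delta_{ol},\Delta_{or}\}$ with $\Delta_{il}=|\arccos(l(c_{il}))-\alpha|$, $\Delta_{ir}=|\arccos(l(c_{ir}))-\beta|$, $\Delta_{ol}=|\arccos(l(c_{ol}))-\alpha|$, $\Delta_{or}=|\arccos(l(c_{or}))-\beta|$, where $c_{il},c_{ir}$ (resp. $c_{ol},c_{or}$) are the values among $c_1,\dots,c_n$ closest to $c_{\min}$ and $c_{\max}$ inside (resp. outside) $[c_{\min},c_{\max}]$. *)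

theory Defs
  imports "HOL-Analysis.Analysis"
begin

definition outer :: "real^'n \<Rightarrow> real^'n^'n" where
  "outer x = (\<chi> a b. x$a * x$b)"

fun cheb_mat :: "nat \<Rightarrow> real^'n^'n \<Rightarrow> real^'n^'n" where
  "cheb_mat 0 S = mat 1"
| "cheb_mat (Suc 0) S = S"
| "cheb_mat (Suc (Suc k)) S = 2 *\<^sub>R (S ** cheb_mat (Suc k) S) - cheb_mat k S"

definition lmap :: "real \<Rightarrow> real" where "lmap z = 2 * z^2 - 1"

definition alpha :: "real \<Rightarrow> real" where "alpha cmin = arccos (lmap cmin)"
definition beta :: "real \<Rightarrow> real" where "beta cmax = arccos (lmap cmax)"

definition eta :: "real \<Rightarrow> real \<Rightarrow> nat \<Rightarrow> real" where
  "eta cmin cmax j = (if j = 0 then (alpha cmin - beta cmax) / pi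
     else 2 * (sin (real j * alpha cmin) - sin (real j * beta cmax)) / (real j * pi))"

definition rho :: "nat \<Rightarrow> nat \<Rightarrow> real" where
  "rho j d = ((real d + 2 - real j) * sin (pi / (real d + 2)) * cos (real j * pi / (real d + 2))
              + cos (pi / (real d + 2)) * sin (real j * pi / (real d + 2)))
             / ((real d + 2) * sin (pi / (real d + 2)))"

definition psi_mat :: "real \<Rightarrow> real \<Rightarrow> nat \<Rightarrow> real^'n^'n \<Rightarrow> real^'n^'n" where
  "psi_mat cmin cmax d S = (\<Sum>j = 0..d. (rho j d * eta cmin cmax j) *\<^sub>R cheb_mat j S)"

definition PS_mat :: "real^'n^'n \<Rightarrow> real^'n^'n \<Rightarrow> ('n \<Rightarrow> real) \<Rightarrow> real \<Rightarrow> real \<Rightarrow> real^'n^'n" where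
  "PS_mat X H c cmin cmax =
     (\<Sum>i\<in>{i. cmin < c i \<and> c i < cmax}. outer (column i X) ** H)
     + (1/2) *\<^sub>R (\<Sum>i\<in>{i. c i = cmin \<or> c i = cmax}. outer (column i X) ** H)"

text \<open>Values among c_1..c_n inside / left of / right of [cmin,cmax];
  c_il = closest inside value to cmin (= minimum), c_ir = closest inside value to cmax (= maximum),
  c_ol = closest value below cmin (= maximum), c_or = closest value above cmax (= minimum).
  Gaps whose defining value does not exist are omitted from the minimum.\<close>
definition delta_set :: "('n::finite \<Rightarrow> real) \<Rightarrow> real \<Rightarrow> real \<Rightarrow> real set" where
  "delta_set c cmin cmax =
     (let I = {v \<in> range c. cmin \<le> v \<and> v \<le> cmax};
          L = {v \<in> range c. v < cmin};
          R = {v \<in> range c. cmax < v}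
      in (if I \<noteq> {} then {\<bar>arccos (lmap (Min I)) - alpha cmin\<bar>,
                            \<bar>arccos (lmap (Max I)) - beta cmax\<bar>} else {})
         \<union> (if L \<noteq> {} then {\<bar>arccos (lmap (Max L)) - alpha cmin\<bar>} else {})
         \<union> (if R \<noteq> {} then {\<bar>arccos (lmap (Min R)) - beta cmax\<bar>} else {}))"

definition delta_min :: "('n::finite \<Rightarrow> real) \<Rightarrow> real \<Rightarrow> real \<Rightarrow> real" where
  "delta_min c cmin cmax = Min (delta_set c cmin cmax)"

end

(*
  With X^T H X = I, the matrix S is similar to diag(l(c_i)) = diag(cos theta_i) and trace P_S
  counts the c_i in (cmin, cmax) (endpoints are excluded by the gap hypothesis), so both traces
  are sums over i and it suffices to bound the pointwise error of the damped series
  psi_d(cos theta) against the indicator of theta in (beta, alpha).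

  The Jackson damping rho_{j,d} is the autocorrelation of the coefficients sin((k+1) pi/(d+2)),
  so the kernel K(t) = 1 + 2 sum_j rho_{j,d} cos(j t) is a squared modulus and its primitive G
  is monotone with G(t + 2 pi) = G(t) + 1. Since psi_d(cos theta) = G(theta + alpha)
  - G(theta - alpha) - G(theta + beta) + G(theta - beta), monotonicity bounds the error by
  1 - 2 G(Delta_min). The coefficients satisfy the three-term recurrence of sin(k pi/(d+2)),
  which gives K(t) (cos t - cos(pi/(d+2)))^2 <= 2 sin^2(pi/(d+2)) / (d+2); hence K(t) = O(t^-4)
  away from 0, and integrating this tail over [Delta_min, pi] yields the bound.
*)
theory Submission
  imports Defs
begin

section \<open>Elementary trigonometric inequalities\<close>

lemma cos_ge_one_minus_half_sq: "1 - x^2 / 2 \<le> cos (x::real)"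
proof -
  have "(sin (x/2))^2 \<le> (x/2)^2"
    using abs_sin_x_le_abs_x[of "x/2"] abs_le_square_iff by blast
  then show ?thesis
    using cos_double_sin[of "x/2"] by (simp add: power_divide)
qed

lemma sin_ge_cubic:
  assumes "0 \<le> x"
  shows "x - x^3 / 6 \<le> (sin x :: real)"
proof -
  have "(\<lambda>t. sin t - t + t^3 / 6) 0 \<le> (\<lambda>t. sin t - t + t^3 / 6) x"
  proof (rule DERIV_nonneg_imp_nondecreasing[OF assms])
    fix t :: real
    have "((\<lambda>t. sin t - t + t^3 / 6) has_real_derivative cos t - (1 - t^2 / 2)) (at t)"
      by (auto intro!: derivative_eq_intros)
    then show "\<exists>y. ((\<lambda>t. sin t - t + t^3 / 6) has_real_derivative y) (at t) \<and> 0 \<le> y"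
      using cos_ge_one_minus_half_sq[of t] by auto
  qed
  then show ?thesis by simp
qed

lemma jordan_sin_ge:
  assumes "0 \<le> x" "x \<le> pi / 2"
  shows "2 * x / pi \<le> sin x"
proof -
  have "convex_on {0..pi/2} (\<lambda>y. 2 * y / pi - sin y)"
  proof (rule f''_ge0_imp_convex[where f' = "\<lambda>y. 2 / pi - cos y" and f'' = sin])
    fix y :: real assume y: "y \<in> {0..pi/2}"
    show "((\<lambda>y. 2 * y / pi - sin y) has_real_derivative 2 / pi - cos y) (at y)"
      by (auto intro!: derivative_eq_intros)
    show "((\<lambda>y. 2 / pi - cos y) has_real_derivative sin y) (at y)"
      by (auto intro!: derivative_eq_intros)
    show "0 \<le> sin y" using y by (auto intro!: sin_ge_zero)
  qed simp
  from convex_onD_Icc'[OF this, of x] assms show ?thesis by simp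
qed

lemma one_minus_cos_ge_quadratic:
  assumes "0 \<le> t" "t \<le> pi"
  shows "2 * t^2 / pi^2 \<le> 1 - cos t"
proof -
  have "2 * (t/2) / pi \<le> sin (t/2)" using assms by (intro jordan_sin_ge) auto
  then have "(t / pi)^2 \<le> (sin (t/2))^2" using assms by (intro power_mono) auto
  then show ?thesis using cos_double_sin[of "t/2"] by (simp add: power_divide)
qed

lemma one_minus_cos_ge_small:
  assumes "0 \<le> t" "t \<le> (2::real)"
  shows "25/72 * t^2 \<le> 1 - cos t"
proof -
  have "(t/2) * (5/6) \<le> t/2 - (t/2)^3 / 6"
  proof -
    have "(t/2)^2 \<le> 1" using assms by (simp add: power_le_one)
    then have "(t/2) * (5/6) \<le> (t/2) * (1 - (t/2)^2 / 6)" using assms by (intro mult_left_mono) auto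
    then show ?thesis by (simp add: power2_eq_square power3_eq_cube algebra_simps)
  qed
  also have "\<dots> \<le> sin (t/2)" using assms by (intro sin_ge_cubic) auto
  finally have "((t/2) * (5/6))^2 \<le> (sin (t/2))^2" using assms by (intro power_mono) auto
  then show ?thesis using cos_double_sin[of "t/2"] by (simp add: power_mult_distrib power_divide)
qed

lemma one_minus_cos_ge_large:
  assumes "2 \<le> t" "t \<le> pi"
  shows "25/18 \<le> 1 - cos t"
proof -
  have "(5/6)^2 \<le> (sin (1::real))^2" using sin_ge_cubic[of 1] by (intro power_mono) auto
  then have "25/18 \<le> 1 - cos (2::real)" using cos_double_sin[of "1::real"] by (simp add: power_divide)
  also have "cos t \<le> cos 2" using assms by (intro cos_monotone_0_pi_le) auto
  then have "1 - cos 2 \<le> 1 - cos t" by simp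
  finally show ?thesis .
qed

section \<open>The Jackson kernel\<close>

definition jackson_step :: "nat \<Rightarrow> real" where
  "jackson_step d = pi / (real d + 2)"

definition jackson_coeff :: "nat \<Rightarrow> nat \<Rightarrow> real" where
  "jackson_coeff d k = sin ((real k + 1) * jackson_step d)"

lemma jackson_step_pos: "0 < jackson_step d"
  unfolding jackson_step_def by simp

lemma jackson_step_le: "jackson_step d \<le> pi / 2"
  unfolding jackson_step_def by (simp add: field_simps)

lemma jackson_step_mult: "(real d + 2) * jackson_step d = pi"
  unfolding jackson_step_def by simp

lemma sin_jackson_step_pos: "0 < sin (jackson_step d)"
  using jackson_step_pos[of d] jackson_step_le[of d] by (intro sin_gt_zero) auto

lemma sum_sin_shifted_products:
  assumes "sin e \<noteq> 0"
  shows "(\<Sum>k<N. sin ((real k + 1) * e) * sin ((real k + 1 + real j) * e))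
       = real N * cos (real j * e) / 2
         - (sin ((2 * real N + real j + 1) * e) - sin ((real j + 1) * e)) / (4 * sin e)"
proof (induction N)
  case 0
  then show ?case by simp
next
  case (Suc N)
  define C where "C = cos ((2 * real N + real j + 2) * e)"
  have new_term: "sin ((real N + 1) * e) * sin ((real N + 1 + real j) * e) = (cos (real j * e) - C) / 2"
    unfolding sin_times_sin C_def by (simp add: algebra_simps)
  have telescope: "sin ((2 * real (Suc N) + real j + 1) * e)
      = sin ((2 * real N + real j + 1) * e) + 2 * C * sin e"
    using cos_times_sin[of "(2 * real N + real j + 2) * e" e] unfolding C_def
    by (simp add: algebra_simps)
  show ?case
    using assms unfolding sum.lessThan_Suc Suc new_term telescope by (simp add: field_simps)
qed

lemma rho_eq_autocorrelation:
  assumes "j \<le> d"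
  shows "rho j d = 2 / (real d + 2) * (\<Sum>k\<le>d - j. jackson_coeff d k * jackson_coeff d (k + j))"
proof -
  define e where "e = jackson_step d"
  define M where "M = real d + 2"
  have s0: "sin e > 0" using sin_jackson_step_pos e_def by simp
  have Me: "M * e = pi" using jackson_step_mult e_def M_def by simp
  have N: "real (d - j) = M - 2 - real j" using assms M_def by (simp add: of_nat_diff)
  have wrap: "sin ((2 * real (Suc (d - j)) + real j + 1) * e) = - sin ((real j + 1) * e)"
  proof -
    have "(2 * real (Suc (d - j)) + real j + 1) * e = 2 * pi - (real j + 1) * e"
      using Me by (simp add: N algebra_simps)
    then show ?thesis by (simp add: sin_diff)
  qed
  have "(\<Sum>k\<le>d - j. jackson_coeff d k * jackson_coeff d (k + j))
      = (\<Sum>k<Suc (d - j). sin ((real k + 1) * e) * sin ((real k + 1 + real j) * e))"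
    unfolding jackson_coeff_def e_def lessThan_Suc_atMost by (simp add: algebra_simps)
  also have "\<dots> = (M - 1 - real j) * cos (real j * e) / 2 + sin ((real j + 1) * e) / (2 * sin e)"
    unfolding sum_sin_shifted_products[OF s0[THEN less_imp_neq, symmetric]] wrap by (simp add: N)
  also have "\<dots> = ((M - real j) * sin e * cos (real j * e) + cos e * sin (real j * e)) / (2 * sin e)"
    using s0 by (simp add: sin_add field_simps)
  also have "\<dots> = M / 2 * rho j d"
  proof -
    have "rho j d = ((M - real j) * sin e * cos (real j * e) + cos e * sin (real j * e)) / (M * sin e)"
      unfolding rho_def M_def e_def jackson_step_def by (simp add: algebra_simps)
    moreover have "M > 0" unfolding M_def by simp
    ultimately show ?thesis using s0 by (simp add: field_simps)
  qed
  finally show ?thesis unfolding M_def by (simp add: field_simps)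
qed

lemma rho_0: "rho 0 d = 1"
  unfolding rho_def using sin_jackson_step_pos[of d] by (simp add: jackson_step_def)

lemma sum_autocorrelation_Suc:
  fixes a :: "nat \<Rightarrow> real"
  shows "(\<Sum>j=1..Suc n. cos (real j * t) * (\<Sum>k\<le>Suc n - j. a k * a (k + j)))
    = (\<Sum>j=1..n. cos (real j * t) * (\<Sum>k\<le>n - j. a k * a (k + j)))
      + a (Suc n) * (\<Sum>k\<le>n. a k * cos (real (Suc n - k) * t))"
proof -
  have inner: "cos (real j * t) * (\<Sum>k\<le>Suc n - j. a k * a (k + j))
      = cos (real j * t) * (\<Sum>k\<le>n - j. a k * a (k + j)) + a (Suc n) * (cos (real j * t) * a (Suc n - j))"
    if "j \<in> {1..n}" for j
  proof -
    have "Suc n - j = Suc (n - j)" "Suc (n - j) + j = Suc n" using that by auto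
    then show ?thesis by (simp add: algebra_simps)
  qed
  have reindex: "(\<Sum>j=1..Suc n. cos (real j * t) * a (Suc n - j)) = (\<Sum>k\<le>n. a k * cos (real (Suc n - k) * t))"
    by (rule sum.reindex_bij_witness[of _ "\<lambda>k. Suc n - k" "\<lambda>j. Suc n - j"]) auto
  have "(\<Sum>j=1..Suc n. cos (real j * t) * (\<Sum>k\<le>Suc n - j. a k * a (k + j)))
      = (\<Sum>j=1..n. cos (real j * t) * (\<Sum>k\<le>Suc n - j. a k * a (k + j)))
        + cos (real (Suc n) * t) * (a 0 * a (Suc n))"
    by (simp add: sum.cl_ivl_Suc)
  also have "(\<Sum>j=1..n. cos (real j * t) * (\<Sum>k\<le>Suc n - j. a k * a (k + j)))
      = (\<Sum>j=1..n. cos (real j * t) * (\<Sum>k\<le>n - j. a k * a (k + j)))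
        + a (Suc n) * (\<Sum>j=1..n. cos (real j * t) * a (Suc n - j))"
    by (subst sum.cong[OF refl inner]) (simp_all add: sum.distrib sum_distrib_left)
  finally have "(\<Sum>j=1..Suc n. cos (real j * t) * (\<Sum>k\<le>Suc n - j. a k * a (k + j)))
      = (\<Sum>j=1..n. cos (real j * t) * (\<Sum>k\<le>n - j. a k * a (k + j)))
        + a (Suc n) * (\<Sum>j=1..Suc n. cos (real j * t) * a (Suc n - j))"
    by (simp add: sum.cl_ivl_Suc algebra_simps)
  then show ?thesis unfolding reindex .
qed

lemma trig_sum_sq_eq_autocorrelation:
  fixes a :: "nat \<Rightarrow> real"
  shows "(\<Sum>k\<le>n. a k * cos (real k * t))^2 + (\<Sum>k\<le>n. a k * sin (real k * t))^2
       = (\<Sum>k\<le>n. (a k)^2) + 2 * (\<Sum>j=1..n. cos (real j * t) * (\<Sum>k\<le>n - j. a k * a (k + j)))"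
proof (induction n)
  case 0
  then show ?case by (simp add: power_mult_distrib)
next
  case (Suc n)
  define C where "C = (\<Sum>k\<le>n. a k * cos (real k * t))"
  define S where "S = (\<Sum>k\<le>n. a k * sin (real k * t))"
  define x where "x = real (Suc n) * t"
  have cross: "C * cos x + S * sin x = (\<Sum>k\<le>n. a k * cos (real (Suc n - k) * t))"
  proof -
    have "real (Suc n - k) * t = x - real k * t" if "k \<le> n" for k
      using that unfolding x_def by (simp add: of_nat_diff algebra_simps)
    then show ?thesis
      unfolding C_def S_def sum_distrib_right
      by (auto simp: sum.distrib[symmetric] cos_diff algebra_simps intro!: sum.cong)
  qed
  have "(\<Sum>k\<le>Suc n. a k * cos (real k * t))^2 + (\<Sum>k\<le>Suc n. a k * sin (real k * t))^2
      = (C + a (Suc n) * cos x)^2 + (S + a (Suc n) * sin x)^2"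
    unfolding C_def S_def x_def by simp
  also have "\<dots> = C^2 + S^2 + (a (Suc n))^2 * ((sin x)^2 + (cos x)^2) + 2 * a (Suc n) * (C * cos x + S * sin x)"
    by (simp only: power2_eq_square algebra_simps)
  also have "\<dots> = C^2 + S^2 + (a (Suc n))^2 + 2 * a (Suc n) * (\<Sum>k\<le>n. a k * cos (real (Suc n - k) * t))"
    by (simp only: cross sin_cos_squared_add mult_1_right)
  also have "\<dots> = (\<Sum>k\<le>Suc n. (a k)^2) + 2 * (\<Sum>j=1..Suc n. cos (real j * t) * (\<Sum>k\<le>Suc n - j. a k * a (k + j)))"
    unfolding sum_autocorrelation_Suc C_def S_def Suc by (simp add: algebra_simps)
  finally show ?case .
qed

lemma mult_by_recurrence_quadratic:
  fixes b :: "nat \<Rightarrow> real" and c :: real and z :: complex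
  assumes rec: "\<And>k. b (k + 2) = 2 * c * b (k + 1) - b k"
  shows "(z^2 - 2 * c * z + 1) * (\<Sum>k\<le>N. of_real (b k) * z^k)
       = of_real (b 0) + of_real (b 1 - 2 * c * b 0) * z
         - of_real (b (N + 1)) * z^(N + 1) + of_real (b N) * z^(N + 2)"
proof (induction N)
  case 0
  then show ?case by (simp add: power2_eq_square algebra_simps)
next
  case (Suc N)
  have rec_N: "b (Suc N + 1) = 2 * c * b (N + 1) - b N" using rec[of N] by simp
  have "(z^2 - 2 * c * z + 1) * (\<Sum>k\<le>Suc N. of_real (b k) * z^k)
      = (z^2 - 2 * c * z + 1) * (\<Sum>k\<le>N. of_real (b k) * z^k)
        + (z^2 - 2 * c * z + 1) * (of_real (b (Suc N)) * z^(Suc N))"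
    by (simp add: algebra_simps)
  also have "\<dots> = of_real (b 0) + of_real (b 1 - 2 * c * b 0) * z
      - of_real (b (Suc N + 1)) * z^(Suc N + 1) + of_real (b (Suc N)) * z^(Suc N + 2)"
    unfolding Suc rec_N by (simp add: power2_eq_square algebra_simps)
  finally show ?case .
qed

definition jackson_kernel :: "nat \<Rightarrow> real \<Rightarrow> real" where
  "jackson_kernel d t = rho 0 d + 2 * (\<Sum>j=1..d. rho j d * cos (real j * t))"

definition jackson_poly :: "nat \<Rightarrow> complex \<Rightarrow> complex" where
  "jackson_poly d z = (\<Sum>k\<le>d. of_real (jackson_coeff d k) * z^k)"

lemma jackson_kernel_eq_norm_sq:
  "jackson_kernel d t = 2 / (real d + 2) * (cmod (jackson_poly d (cis t)))^2"
proof -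
  define M where "M = real d + 2"
  have M0: "M > 0" unfolding M_def by simp
  have autocorr: "(\<Sum>k\<le>d - j. jackson_coeff d k * jackson_coeff d (k + j)) = M / 2 * rho j d"
    if "j \<le> d" for j
    using rho_eq_autocorrelation[OF that] M0 unfolding M_def by (simp add: field_simps)
  have "jackson_poly d (cis t) = (\<Sum>k\<le>d. of_real (jackson_coeff d k) * cis (real k * t))"
    unfolding jackson_poly_def by (rule sum.cong[OF refl]) (simp only: Complex.DeMoivre)
  then have "(cmod (jackson_poly d (cis t)))^2
      = (\<Sum>k\<le>d. jackson_coeff d k * cos (real k * t))^2 + (\<Sum>k\<le>d. jackson_coeff d k * sin (real k * t))^2"
    by (simp add: cmod_power2 Re_sum Im_sum)
  also have "\<dots> = (\<Sum>k\<le>d. (jackson_coeff d k)^2)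
      + 2 * (\<Sum>j=1..d. cos (real j * t) * (\<Sum>k\<le>d - j. jackson_coeff d k * jackson_coeff d (k + j)))"
    by (rule trig_sum_sq_eq_autocorrelation)
  also have "\<dots> = M / 2 * rho 0 d + 2 * (\<Sum>j=1..d. M / 2 * (rho j d * cos (real j * t)))"
  proof -
    have "(\<Sum>j=1..d. cos (real j * t) * (\<Sum>k\<le>d - j. jackson_coeff d k * jackson_coeff d (k + j)))
        = (\<Sum>j=1..d. M / 2 * (rho j d * cos (real j * t)))"
      by (rule sum.cong[OF refl]) (simp add: autocorr)
    then show ?thesis using autocorr[of 0] by (simp add: power2_eq_square)
  qed
  also have "\<dots> = M / 2 * jackson_kernel d t"
    unfolding jackson_kernel_def by (simp add: sum_distrib_left algebra_simps)
  finally show ?thesis using M0 unfolding M_def by (simp add: field_simps)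
qed

lemma jackson_kernel_nonneg: "0 \<le> jackson_kernel d t"
  unfolding jackson_kernel_eq_norm_sq by simp

lemma sin_mult_recurrence:
  "sin (real (k + 2) * e) = 2 * cos e * sin (real (k + 1) * e) - sin (real k * e)"
proof -
  have "sin ((real k + 1) * e + e) + sin ((real k + 1) * e - e) = 2 * sin ((real k + 1) * e) * cos e"
    by (simp add: sin_add sin_diff)
  then show ?thesis by (simp add: algebra_simps)
qed

lemma cis_quadratic: "(cis t)^2 - 2 * c * cis t + 1 = cis t * of_real (2 * (cos t - c))"
proof -
  have "cis t * cnj (cis t) = 1" by (simp add: cis_cnj cis_mult)
  then have "(cis t)^2 - 2 * c * cis t + 1 = cis t * (cis t + cnj (cis t) - 2 * c)"
    by (simp add: power2_eq_square algebra_simps)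
  also have "cis t + cnj (cis t) = of_real (2 * cos t)" unfolding complex_add_cnj by simp
  finally show ?thesis by (simp add: algebra_simps)
qed

lemma jackson_poly_shift:
  "(\<Sum>k\<le>d + 2. of_real (sin (real k * jackson_step d)) * z^k) = z * jackson_poly d z"
proof -
  have "(\<Sum>k\<le>Suc (Suc d). of_real (sin (real k * jackson_step d)) * z^k)
      = (\<Sum>k\<le>Suc d. of_real (sin (real (Suc k) * jackson_step d)) * z^(Suc k))"
    unfolding sum.atMost_Suc_shift by simp
  also have "\<dots> = (\<Sum>k\<le>d. of_real (sin (real (Suc k) * jackson_step d)) * z^(Suc k))"
    using jackson_step_mult[of d] by (simp add: algebra_simps)
  also have "\<dots> = z * jackson_poly d z"
    unfolding jackson_poly_def sum_distrib_left jackson_coeff_def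
    by (rule sum.cong) (auto simp: algebra_simps)
  finally show ?thesis by simp
qed

lemma jackson_poly_bound:
  "cmod (jackson_poly d (cis t)) * \<bar>cos t - cos (jackson_step d)\<bar> \<le> sin (jackson_step d)"
proof -
  define e where "e = jackson_step d"
  define b where "b = (\<lambda>k::nat. sin (real k * e))"
  define z where "z = cis t"
  have s0: "0 < sin e" using sin_jackson_step_pos e_def by simp
  have Me: "(real d + 2) * e = pi" using jackson_step_mult e_def by simp
  have b0: "b 0 = 0" and b1: "b 1 = sin e" and b_end: "b (d + 2) = 0"
    unfolding b_def using Me by (simp_all add: algebra_simps)
  have "real (d + 2 + 1) * e = pi + e" using Me by (simp add: algebra_simps)
  then have b_after: "b (d + 2 + 1) = - sin e" unfolding b_def by simp
  have shift: "(\<Sum>k\<le>d + 2. of_real (b k) * z^k) = z * jackson_poly d z"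
    unfolding b_def e_def by (rule jackson_poly_shift)
  have z1: "cmod z = 1" unfolding z_def by simp
  \<comment> \<open>b extends the coefficients by b 0 = b (d + 2) = 0 and satisfies the recurrence of sin (k e),
    so multiplying by z^2 - 2 cos e z + 1 leaves only boundary terms.\<close>
  have "z * (of_real (2 * (cos t - cos e)) * (z * jackson_poly d z)) = z * (of_real (sin e) * (1 + z^(d + 2)))"
  proof -
    have rec: "b (k + 2) = 2 * cos e * b (k + 1) - b k" for k
      unfolding b_def by (rule sin_mult_recurrence)
    have quad: "z^2 - 2 * cos e * z + 1 = z * of_real (2 * (cos t - cos e))"
      unfolding z_def using cis_quadratic[of t "cos e"] by simp
    show ?thesis
      using mult_by_recurrence_quadratic[OF rec, of z "d + 2"]
      unfolding shift quad b0 b1 b_end b_after by (simp add: algebra_simps power_add)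
  qed
  then have "of_real (2 * (cos t - cos e)) * (z * jackson_poly d z) = of_real (sin e) * (1 + z^(d + 2))"
    using z1 by auto
  then have "2 * \<bar>cos t - cos e\<bar> * cmod (jackson_poly d z) = sin e * cmod (1 + z^(d + 2))"
    using s0 z1 by (metis (no_types, lifting) abs_mult abs_numeral abs_of_pos mult_1_left norm_mult norm_of_real)
  also have "\<dots> \<le> sin e * 2"
    using norm_triangle_ineq[of 1 "z^(d + 2)"] z1 s0 by (intro mult_left_mono) (auto simp: norm_power norm_mult)
  finally show ?thesis unfolding z_def e_def by (simp add: mult.commute)
qed

lemma jackson_kernel_bound:
  "jackson_kernel d t * (cos t - cos (jackson_step d))^2 \<le> 2 * (sin (jackson_step d))^2 / (real d + 2)"
proof -
  have "(cmod (jackson_poly d (cis t)) * \<bar>cos t - cos (jackson_step d)\<bar>)^2 \<le> (sin (jackson_step d))^2"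
    using jackson_poly_bound by (intro power_mono) auto
  from mult_left_mono[OF this, of "2 / (real d + 2)"] show ?thesis
    unfolding jackson_kernel_eq_norm_sq by (simp add: power_mult_distrib mult.assoc)
qed

definition jackson_primitive :: "nat \<Rightarrow> real \<Rightarrow> real" where
  "jackson_primitive d t = (rho 0 d * t + 2 * (\<Sum>j=1..d. rho j d * sin (real j * t) / real j)) / (2 * pi)"

lemma jackson_primitive_has_derivative:
  "(jackson_primitive d has_real_derivative jackson_kernel d t / (2 * pi)) (at t)"
proof -
  have "((\<lambda>t. rho j d * sin (real j * t) / real j) has_real_derivative rho j d * cos (real j * t)) (at t)"
    if "j \<in> {1..d}" for j
    using that by (auto intro!: derivative_eq_intros)
  then have "((\<lambda>t. \<Sum>j=1..d. rho j d * sin (real j * t) / real j)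
      has_real_derivative (\<Sum>j=1..d. rho j d * cos (real j * t))) (at t)"
    by (rule DERIV_sum)
  then have "((\<lambda>t. (rho 0 d * t + 2 * (\<Sum>j=1..d. rho j d * sin (real j * t) / real j)) / (2 * pi))
      has_real_derivative (rho 0 d * 1 + 2 * (\<Sum>j=1..d. rho j d * cos (real j * t))) / (2 * pi)) (at t)"
    by (intro DERIV_cdivide DERIV_add DERIV_cmult DERIV_ident)
  then show ?thesis unfolding jackson_primitive_def jackson_kernel_def by simp
qed

lemma mono_jackson_primitive: "mono (jackson_primitive d)"
proof (rule monoI)
  fix s t :: real assume "s \<le> t"
  then show "jackson_primitive d s \<le> jackson_primitive d t"
    by (rule DERIV_nonneg_imp_nondecreasing)
      (use jackson_primitive_has_derivative jackson_kernel_nonneg in \<open>auto intro!: exI\<close>)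
qed

lemma jackson_primitive_add_2pi: "jackson_primitive d (t + 2 * pi) = jackson_primitive d t + 1"
proof -
  have "sin (real j * (t + 2 * pi)) = sin (real j * t)" for j
  proof -
    have "real j * (t + 2 * pi) = real j * t + 2 * real j * pi" by (simp add: algebra_simps)
    then show ?thesis by (simp add: sin_add)
  qed
  then show ?thesis unfolding jackson_primitive_def rho_0 by (simp add: field_simps)
qed

lemma jackson_primitive_minus: "jackson_primitive d (- t) = - jackson_primitive d t"
  unfolding jackson_primitive_def by (simp add: sum_negf) (simp add: field_simps)

lemma jackson_primitive_0: "jackson_primitive d 0 = 0"
  unfolding jackson_primitive_def by simp

lemma jackson_primitive_pi: "jackson_primitive d pi = 1 / 2"
  unfolding jackson_primitive_def rho_0 by simp

lemma jackson_primitive_reflect: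
  "jackson_primitive d (2 * pi - t) = 1 - jackson_primitive d t"
  using jackson_primitive_add_2pi[of d "- t"] by (simp add: jackson_primitive_minus)

section \<open>Tail of the Jackson primitive\<close>

lemma jackson_kernel_le_quartic:
  assumes "0 < D" "D \<le> t" "t \<le> pi" "0 \<le> r" "r < 1"
    and gap: "1 - cos (jackson_step d) \<le> r * (1 - cos D)"
  shows "jackson_kernel d t
    \<le> (sin (jackson_step d))^2 * pi^4 / (2 * (real d + 2) * (1 - r)^2 * t^4)"
proof -
  define Y where "Y = (1 - r) * (2 * t^2 / pi^2)"
  have t0: "0 < t" using assms by simp
  have Y0: "0 < Y" unfolding Y_def using assms t0 by simp
  have "cos t \<le> cos D" using assms by (intro cos_monotone_0_pi_le) auto
  then have "1 - cos (jackson_step d) \<le> r * (1 - cos t)"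
    using gap assms(4) by (meson diff_left_mono mult_left_mono order_trans)
  moreover have "(1 - r) * (2 * t^2 / pi^2) \<le> (1 - r) * (1 - cos t)"
    using one_minus_cos_ge_quadratic[of t] assms t0 by (intro mult_left_mono) auto
  ultimately have "Y \<le> cos (jackson_step d) - cos t" unfolding Y_def by (simp add: algebra_simps)
  then have "Y^2 \<le> (cos (jackson_step d) - cos t)^2"
    using Y0 by (intro power_mono) auto
  then have "Y^2 \<le> (cos t - cos (jackson_step d))^2"
    by (simp add: power2_commute)
  then have "jackson_kernel d t * Y^2 \<le> 2 * (sin (jackson_step d))^2 / (real d + 2)"
    using jackson_kernel_bound[of d t] jackson_kernel_nonneg[of d t]
    by (meson mult_left_mono order_trans)
  then have "jackson_kernel d t \<le> 2 * (sin (jackson_step d))^2 / (real d + 2) / Y^2"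
    using Y0 by (subst pos_le_divide_eq) auto
  also have "\<dots> = (sin (jackson_step d))^2 * pi^4 / (2 * (real d + 2) * (1 - r)^2 * t^4)"
  proof -
    have Y_sq: "Y^2 = (1 - r)^2 * (4 * t^4) / pi^4"
      unfolding Y_def power2_eq_square power4_eq_xxxx by (simp add: field_simps)
    define M where "M = real d + 2"
    have "(1 - r)^2 > 0" "M > 0" using assms unfolding M_def by simp_all
    then show ?thesis unfolding Y_sq M_def[symmetric] using t0 by (simp add: field_simps)
  qed
  finally show ?thesis .
qed

lemma sq_bound_of_cube_bound:
  fixes x y :: real
  assumes "0 \<le> x" "x^3 < 4/27 * y^3"
  shows "24 * x^2 \<le> 7 * y^2"
proof (rule ccontr)
  assume "\<not> 24 * x^2 \<le> 7 * y^2"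
  then have "(7 * y^2)^3 < (24 * x^2)^3" by (intro power_strict_mono) auto
  moreover have "(x^3)^2 < (4/27 * y^3)^2"
    using assms by (intro power_strict_mono) auto
  moreover have "(4/27 * y^3)^2 = 16/729 * y^6" and "(24 * x^2)^3 = 13824 * x^6"
    by (simp_all add: power_mult_distrib power_mult[symmetric] power_divide)
  moreover have "0 \<le> y^6" by (simp add: zero_le_even_power)
  ultimately show False
    by (simp add: power_mult_distrib power_mult[symmetric])
qed

(* 21/50 is chosen so that (1 - 21/50)^2 \<ge> 1/3, the slack used in jackson_tail_bound_of_gap. *)
lemma jackson_step_gap:
  assumes "1 \<le> d" "0 < D" "D \<le> pi" and nontrivial: "pi^6 < 2 * (real d + 2)^3 * D^4"
  shows "1 - cos (jackson_step d) \<le> 21/50 * (1 - cos D)"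
proof (cases "2 \<le> D")
  case True
  have "jackson_step d \<le> pi / 3" unfolding jackson_step_def using assms by (simp add: field_simps)
  then have "cos (pi / 3) \<le> cos (jackson_step d)"
    using jackson_step_pos[of d] by (intro cos_monotone_0_pi_le) auto
  then show ?thesis using one_minus_cos_ge_large[OF True assms(3)] by (simp add: cos_60)
next
  case False
  define e where "e = jackson_step d"
  have e0: "0 < e" using jackson_step_pos e_def by simp
  have "(pi / e)^3 = (real d + 2)^3" unfolding e_def jackson_step_def by simp
  then have "pi^6 < 2 * (pi^3 / e^3) * D^4" using nontrivial by (simp add: power_divide)
  then have "pi^3 * e^3 < 2 * D^4"
    using e0 by (simp add: field_simps power_add[symmetric] numeral_eq_Suc)
  also have "\<dots> \<le> 2 * (2 * D^3)"
    using False assms(2) by (simp add: power_Suc[symmetric] mult_right_mono numeral_eq_Suc)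
  finally have "e^3 < 4/27 * D^3 * (27 / pi^3)" by (simp add: field_simps)
  also have "\<dots> \<le> 4/27 * D^3"
  proof -
    have "3^3 \<le> pi^3" using pi_gt3 by (intro power_mono) auto
    then show ?thesis using assms(2) by (simp add: field_simps)
  qed
  finally have "24 * e^2 \<le> 7 * D^2" using e0 by (intro sq_bound_of_cube_bound) auto
  then have "1 - cos e \<le> 21/50 * (25/72 * D^2)"
    using cos_ge_one_minus_half_sq[of e] by simp
  also have "\<dots> \<le> 21/50 * (1 - cos D)"
    using one_minus_cos_ge_small[of D] False assms(2) by simp
  finally show ?thesis unfolding e_def .
qed

lemma jackson_tail_le_of_kernel_le:
  assumes "0 < D" "D \<le> pi" "0 \<le> C"
    and kernel_le: "\<And>t. D \<le> t \<Longrightarrow> t \<le> pi \<Longrightarrow> jackson_kernel d t \<le> C / t^4"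
  shows "1 - 2 * jackson_primitive d D \<le> C / (3 * pi * D^3)"
proof -
  define h where "h = (\<lambda>t. 2 * jackson_primitive d t + C / (3 * pi) / t^3)"
  have "h pi \<le> h D"
  proof (rule DERIV_nonpos_imp_nonincreasing[OF assms(2)])
    fix t assume t: "D \<le> t" "t \<le> pi"
    then have t0: "t \<noteq> 0" using assms by simp
    have "(h has_real_derivative 2 * (jackson_kernel d t / (2 * pi)) + C / (3 * pi) * (- (real 3 * t^2) / (t^3)^2)) (at t)"
      unfolding h_def using t0
      by (intro DERIV_add DERIV_cmult jackson_primitive_has_derivative DERIV_cdivide)
        (auto intro!: derivative_eq_intros)
    moreover have "2 * (jackson_kernel d t / (2 * pi)) + C / (3 * pi) * (- (real 3 * t^2) / (t^3)^2)
        = (jackson_kernel d t - C / t^4) / pi"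
      using t0 by (simp add: field_simps power2_eq_square power3_eq_cube power4_eq_xxxx)
    moreover have "(jackson_kernel d t - C / t^4) / pi \<le> 0"
      using kernel_le[OF t] by (simp add: divide_nonpos_pos)
    ultimately show "\<exists>y. (h has_real_derivative y) (at t) \<and> y \<le> 0" by auto
  qed
  moreover have "0 \<le> C / (3 * pi) / pi^3" using assms by simp
  ultimately show ?thesis unfolding h_def jackson_primitive_pi by simp
qed

lemma one_minus_div_pi_le:
  assumes "0 < D" "D \<le> pi"
  shows "1 - D / pi \<le> pi^6 / (16 * D^4)"
proof -
  define u where "u = D / pi"
  have u: "0 < u" "u \<le> 1" using assms unfolding u_def by (auto simp: field_simps)
  have "4 * u * (1 - u) \<le> 1" using zero_le_power2[of "2 * u - 1"] by (simp add: power2_eq_square algebra_simps)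
  then have "4 * u^3 * (4 * u * (1 - u)) \<le> 4 * u^3"
    using u by (simp add: mult_left_le)
  then have "16 * u^4 * (1 - u) \<le> 4 * u^3"
    by (simp add: power_numeral_reduce algebra_simps)
  also have "\<dots> \<le> 4" using u by (simp add: power_le_one)
  also have "\<dots> \<le> pi^2" using pi_ge_two power_mono[of 2 pi 2] by simp
  finally have k: "16 * u^4 * (1 - u) \<le> pi^2" .
  have "(1 - u) * (16 * D^4) = 16 * u^4 * (1 - u) * pi^4"
    unfolding u_def by (simp add: power_divide field_simps)
  also have "\<dots> \<le> pi^2 * pi^4" using k by (rule mult_right_mono) simp
  also have "\<dots> = pi^6" by (simp add: power_add[symmetric])
  finally show ?thesis unfolding u_def using assms by (simp add: field_simps)
qed

lemma sin_jackson_step_mult_le: "sin (jackson_step d) * (real d + 2) \<le> pi"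
proof -
  have "sin (jackson_step d) * (real d + 2) \<le> jackson_step d * (real d + 2)"
    using sin_x_le_x[of "jackson_step d"] jackson_step_pos[of d] by (intro mult_right_mono) auto
  moreover have "jackson_step d * (real d + 2) = pi" using jackson_step_mult[of d] by (simp add: mult.commute)
  ultimately show ?thesis by linarith
qed

lemma jackson_tail_bound_of_gap:
  assumes "0 < D" "D \<le> pi" and gap: "1 - cos (jackson_step d) \<le> 21/50 * (1 - cos D)"
  shows "1 - 2 * jackson_primitive d D \<le> pi^6 / (2 * (real d + 2)^3 * D^4)"
proof -
  define M where "M = real d + 2"
  define s where "s = sin (jackson_step d)"
  define C where "C = 3 * s^2 * pi^4 / (2 * M)"
  have M0: "0 < M" unfolding M_def by simp
  have "jackson_kernel d t \<le> C / t^4" if "D \<le> t" "t \<le> pi" for t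
  proof -
    have "jackson_kernel d t \<le> s^2 * pi^4 / (2 * M * (1 - 21/50)^2 * t^4)"
      using jackson_kernel_le_quartic[OF assms(1) that _ _ gap] unfolding M_def s_def by simp
    also have "\<dots> \<le> C / t^4"
      unfolding C_def using M0 that assms by (simp add: field_simps)
    finally show ?thesis .
  qed
  then have "1 - 2 * jackson_primitive d D \<le> C / (3 * pi * D^3)"
    using assms M0 by (intro jackson_tail_le_of_kernel_le) (auto simp: C_def)
  also have "\<dots> \<le> pi^6 / (2 * M^3 * D^4)"
  proof -
    have "(s * M)^2 * D \<le> pi^2 * pi"
      using sin_jackson_step_mult_le[of d] sin_jackson_step_pos[of d] assms M0 unfolding s_def M_def
      by (intro mult_mono power_mono) auto
    also have "pi^2 * pi = pi^3" by (simp add: power2_eq_square power3_eq_cube)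
    finally have "(s * M)^2 * D * pi^3 \<le> pi^3 * pi^3" by (rule mult_right_mono) simp
    also have "\<dots> = pi^6" by (simp flip: power_add)
    finally have "(s * M)^2 * D * pi^3 / (2 * M^3 * D^4) \<le> pi^6 / (2 * M^3 * D^4)"
      by (rule divide_right_mono) (use assms M0 in simp)
    moreover have "C / (3 * pi * D^3) = (s * M)^2 * D * pi^3 / (2 * M^3 * D^4)"
      unfolding C_def using assms M0
      by (simp add: field_simps power2_eq_square power3_eq_cube power4_eq_xxxx)
    ultimately show ?thesis by simp
  qed
  finally show ?thesis unfolding M_def .
qed

lemma jackson_tail_bound:
  assumes "0 < D" "D \<le> pi"
  shows "1 - 2 * jackson_primitive d D \<le> pi^6 / (2 * (real d + 2)^3 * D^4)"
proof -
  consider "2 * (real d + 2)^3 * D^4 \<le> pi^6" | "d = 0" | "1 \<le> d" "pi^6 < 2 * (real d + 2)^3 * D^4"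
    by linarith
  then show ?thesis
  proof cases
    case 1
    then have "1 \<le> pi^6 / (2 * (real d + 2)^3 * D^4)" using assms by (simp add: field_simps)
    moreover have "0 \<le> jackson_primitive d D"
      using monoD[OF mono_jackson_primitive, of 0 D] assms by (simp add: jackson_primitive_0)
    ultimately show ?thesis by linarith
  next
    case 2
    then show ?thesis using one_minus_div_pi_le[OF assms] by (simp add: jackson_primitive_def rho_0)
  next
    case 3
    show ?thesis by (rule jackson_tail_bound_of_gap[OF assms jackson_step_gap[OF 3(1) assms 3(2)]])
  qed
qed

section \<open>Pointwise error of the damped Chebyshev series\<close>

lemma window_error_of_mono_periodic:
  fixes G :: "real \<Rightarrow> real"
  assumes mono: "mono G" and periodic: "\<And>t. G (t + 2 * pi) = G t + 1"
    and th: "0 \<le> th" "th \<le> pi" and ab: "0 \<le> b" "b \<le> a" "a \<le> pi"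
    and gap_a: "D \<le> \<bar>th - a\<bar>" and gap_b: "D \<le> \<bar>th - b\<bar>"
  shows "\<bar>(if b < th \<and> th < a then 1 else 0) - (G (th + a) - G (th - a) - G (th + b) + G (th - b))\<bar>
         \<le> G (2 * pi - D) - G D"
proof -
  \<comment> \<open>In each case the error is an increment of G over a subinterval of [D, 2 pi - D],
    after shifting by one period where needed.\<close>
  note G_le = monoD[OF mono]
  consider "b < th \<and> th < a" | "a \<le> th" | "th \<le> b" by linarith
  then show ?thesis
  proof cases
    case 1
    have "G D \<le> G (th - b)" "G (th - b) \<le> G (th + b)" "G (th + b) \<le> G (th + a)"
      "G (th + a) \<le> G (th - a + 2 * pi)" "G (th - a + 2 * pi) \<le> G (2 * pi - D)"
      using 1 ab gap_a gap_b by (auto intro!: G_le)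
    then show ?thesis using 1 periodic[of "th - a"] by simp
  next
    case 2
    have "G D \<le> G (th - a)" "G (th - a) \<le> G (th - b)" "G (th - b) \<le> G (th + b)"
      "G (th + b) \<le> G (th + a)" "G (th + a) \<le> G (2 * pi - D)"
      using 2 th ab gap_a by (auto intro!: G_le)
    then show ?thesis using 2 ab by simp
  next
    case 3
    have "G D \<le> G (th + b)" "G (th + b) \<le> G (th + a)" "G (th + a) \<le> G (th - a + 2 * pi)"
      "G (th - a + 2 * pi) \<le> G (th - b + 2 * pi)" "G (th - b + 2 * pi) \<le> G (2 * pi - D)"
      using 3 th ab gap_b by (auto intro!: G_le)
    then show ?thesis using 3 periodic[of "th - a"] periodic[of "th - b"] by simp
  qed
qed

lemma jackson_series_eq_primitive:
  "(\<Sum>j=0..d. rho j d * eta cmin cmax j * cos (real j * th))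
   = jackson_primitive d (th + alpha cmin) - jackson_primitive d (th - alpha cmin)
     - jackson_primitive d (th + beta cmax) + jackson_primitive d (th - beta cmax)"
proof -
  define a where "a = alpha cmin"
  define b where "b = beta cmax"
  have term_j: "rho j d * eta cmin cmax j * cos (real j * th)
      = rho j d * (sin (real j * (th + a)) - sin (real j * (th - a))
                   - sin (real j * (th + b)) + sin (real j * (th - b))) / (real j * pi)"
    if "j \<in> {1..d}" for j
  proof -
    have sum_to_product: "sin (real j * (th + a)) - sin (real j * (th - a)) - sin (real j * (th + b))
        + sin (real j * (th - b)) = 2 * cos (real j * th) * (sin (real j * a) - sin (real j * b))"
      by (simp add: distrib_left right_diff_distrib sin_add sin_diff algebra_simps)
    show ?thesis
      using that unfolding sum_to_product eta_def a_def[symmetric] b_def[symmetric]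
      by (simp add: field_simps)
  qed
  have primitive: "jackson_primitive d x
      = x / (2 * pi) + (\<Sum>j=1..d. 2 * rho j d * sin (real j * x) / real j / (2 * pi))" for x
    unfolding jackson_primitive_def rho_0
    by (simp add: add_divide_distrib sum_divide_distrib sum_distrib_left mult.assoc)
  have "(\<Sum>j=0..d. rho j d * eta cmin cmax j * cos (real j * th))
      = (a - b) / pi + (\<Sum>j=1..d. rho j d * eta cmin cmax j * cos (real j * th))"
    by (simp add: sum.atLeast_Suc_atMost eta_def a_def b_def rho_0)
  also have "\<dots> = (a - b) / pi + (\<Sum>j=1..d. rho j d * (sin (real j * (th + a)) - sin (real j * (th - a))
                   - sin (real j * (th + b)) + sin (real j * (th - b))) / (real j * pi))"
    using term_j by simp
  also have "\<dots> = jackson_primitive d (th + a) - jackson_primitive d (th - a)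
      - jackson_primitive d (th + b) + jackson_primitive d (th - b)"
    unfolding primitive
    by (simp add: sum.distrib[symmetric] sum_subtractf[symmetric] algebra_simps
        add_divide_distrib diff_divide_distrib)
  finally show ?thesis unfolding a_def b_def .
qed

(* The angle of the eigenvalue l(v) of S, so that alpha cmin = theta cmin and beta cmax = theta cmax. *)
definition theta :: "real \<Rightarrow> real" where
  "theta v = arccos (lmap v)"

lemma lmap_bounds: "0 \<le> v \<Longrightarrow> v \<le> 1 \<Longrightarrow> -1 \<le> lmap v \<and> lmap v \<le> 1"
  unfolding lmap_def by (simp add: power_le_one)

lemma cos_theta: "0 \<le> v \<Longrightarrow> v \<le> 1 \<Longrightarrow> cos (theta v) = lmap v"
  unfolding theta_def using lmap_bounds by simp

lemma theta_bounds: "0 \<le> v \<Longrightarrow> v \<le> 1 \<Longrightarrow> 0 \<le> theta v \<and> theta v \<le> pi"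
  unfolding theta_def using lmap_bounds arccos_bounded by blast

lemma theta_less_iff:
  assumes "0 \<le> v" "v \<le> 1" "0 \<le> w" "w \<le> 1"
  shows "theta v < theta w \<longleftrightarrow> w < v"
proof -
  have "lmap x < lmap y \<longleftrightarrow> x < y" if "0 \<le> x" "0 \<le> y" for x y
    unfolding lmap_def using that power_less_imp_less_base[of x 2 y] power_strict_mono[of x y 2] by auto
  moreover have "\<bar>lmap v\<bar> \<le> 1" "\<bar>lmap w\<bar> \<le> 1" using lmap_bounds assms by (auto simp: abs_le_iff)
  ultimately show ?thesis unfolding theta_def using arccos_less_mono assms by metis
qed

lemma theta_le_iff:
  assumes "0 \<le> v" "v \<le> 1" "0 \<le> w" "w \<le> 1"
  shows "theta v \<le> theta w \<longleftrightarrow> w \<le> v"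
  using theta_less_iff[OF assms] theta_less_iff[OF assms(3,4,1,2)] by linarith

lemma delta_min_le:
  fixes c :: "'n::finite \<Rightarrow> real" and cmin cmax :: real
  defines "I \<equiv> {v \<in> range c. cmin \<le> v \<and> v \<le> cmax}"
    and "L \<equiv> {v \<in> range c. v < cmin}" and "R \<equiv> {v \<in> range c. cmax < v}"
  shows "I \<noteq> {} \<Longrightarrow> delta_min c cmin cmax \<le> \<bar>theta (Min I) - theta cmin\<bar>"
    and "I \<noteq> {} \<Longrightarrow> delta_min c cmin cmax \<le> \<bar>theta (Max I) - theta cmax\<bar>"
    and "L \<noteq> {} \<Longrightarrow> delta_min c cmin cmax \<le> \<bar>theta (Max L) - theta cmin\<bar>"
    and "R \<noteq> {} \<Longrightarrow> delta_min c cmin cmax \<le> \<bar>theta (Min R) - theta cmax\<bar>"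
  unfolding delta_min_def delta_set_def Let_def assms[symmetric] theta_def alpha_def beta_def
  by (rule Min_le; simp)+

lemma theta_dist_mono:
  assumes "0 \<le> x" "x \<le> y" "y \<le> z" "z \<le> 1"
  shows "\<bar>theta y - theta x\<bar> \<le> \<bar>theta z - theta x\<bar>" and "\<bar>theta y - theta z\<bar> \<le> \<bar>theta x - theta z\<bar>"
proof -
  have "theta z \<le> theta y" "theta y \<le> theta x" using assms theta_le_iff by auto
  then show "\<bar>theta y - theta x\<bar> \<le> \<bar>theta z - theta x\<bar>" and "\<bar>theta y - theta z\<bar> \<le> \<bar>theta x - theta z\<bar>"
    by auto
qed

lemma delta_min_le_angle_gaps:
  fixes c :: "'n::finite \<Rightarrow> real"
  assumes c01: "\<And>i. 0 \<le> c i \<and> c i \<le> 1" and interval: "0 \<le> cmin" "cmin \<le> cmax" "cmax \<le> 1"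
  shows "delta_min c cmin cmax \<le> \<bar>theta (c i) - theta cmin\<bar> \<and> delta_min c cmin cmax \<le> \<bar>theta (c i) - theta cmax\<bar>"
proof -
  define I where "I = {v \<in> range c. cmin \<le> v \<and> v \<le> cmax}"
  define L where "L = {v \<in> range c. v < cmin}"
  define R where "R = {v \<in> range c. cmax < v}"
  note le_gap = delta_min_le[where c = c and cmin = cmin and cmax = cmax, folded I_def L_def R_def]
  have fin: "finite I" "finite L" "finite R" unfolding I_def L_def R_def by auto
  have ci: "0 \<le> c i" "c i \<le> 1" using c01 by auto
  consider "c i \<in> I" | "c i \<in> L" | "c i \<in> R" unfolding I_def L_def R_def by force
  then show ?thesis
  proof cases
    case 1
    then have "I \<noteq> {}" by auto
    moreover from this have "Min I \<in> I" "Max I \<in> I" "Min I \<le> c i" "c i \<le> Max I" using 1 fin by auto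
    ultimately show ?thesis
      using le_gap(1,2) theta_dist_mono(1)[of cmin "Min I" "c i"] theta_dist_mono(2)[of "c i" "Max I" cmax]
        ci interval unfolding I_def by fastforce
  next
    case 2
    then have "L \<noteq> {}" by auto
    moreover from this have "Max L \<in> L" "c i \<le> Max L" using 2 fin by auto
    ultimately show ?thesis
      using le_gap(3) theta_dist_mono(2)[of "c i" "Max L" cmin] theta_dist_mono(1)[of "c i" cmin cmax]
        ci interval unfolding L_def by fastforce
  next
    case 3
    then have "R \<noteq> {}" by auto
    moreover from this have "Min R \<in> R" "Min R \<le> c i" using 3 fin by auto
    ultimately show ?thesis
      using le_gap(4) theta_dist_mono(1)[of cmax "Min R" "c i"] theta_dist_mono(2)[of cmin cmax "c i"]
        ci c01 interval unfolding R_def by fastforce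
  qed
qed

lemma jackson_series_pointwise_error:
  assumes v: "0 \<le> v" "v \<le> 1" and interval: "0 \<le> cmin" "cmin \<le> cmax" "cmax \<le> 1"
    and D: "0 < D" "D \<le> \<bar>theta v - theta cmin\<bar>" "D \<le> \<bar>theta v - theta cmax\<bar>"
  shows "\<bar>(if cmin < v \<and> v < cmax then 1 else 0)
          - (\<Sum>j=0..d. rho j d * eta cmin cmax j * cos (real j * theta v))\<bar>
         \<le> pi^6 / (2 * (real d + 2)^3 * D^4)"
proof -
  have ab: "alpha cmin = theta cmin" "beta cmax = theta cmax"
    unfolding alpha_def beta_def theta_def by auto
  have range: "0 \<le> theta v" "theta v \<le> pi" "0 \<le> theta cmax" "theta cmax \<le> theta cmin" "theta cmin \<le> pi"
    using theta_bounds theta_le_iff v interval by auto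
  have window: "(cmin < v \<and> v < cmax) \<longleftrightarrow> (theta cmax < theta v \<and> theta v < theta cmin)"
    using theta_less_iff v interval by auto
  have "\<bar>(if cmin < v \<and> v < cmax then 1 else 0)
          - (\<Sum>j=0..d. rho j d * eta cmin cmax j * cos (real j * theta v))\<bar>
      \<le> jackson_primitive d (2 * pi - D) - jackson_primitive d D"
    unfolding window jackson_series_eq_primitive ab
    by (rule window_error_of_mono_periodic[OF mono_jackson_primitive jackson_primitive_add_2pi range D(2,3)])
  also have "\<dots> = 1 - 2 * jackson_primitive d D"
    by (simp add: jackson_primitive_reflect)
  also have "\<dots> \<le> pi^6 / (2 * (real d + 2)^3 * D^4)"
    using D range by (intro jackson_tail_bound) auto
  finally show ?thesis .
qed

section \<open>Traces of the spectral projector and of its approximation\<close>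

definition diag_mat :: "('n::finite \<Rightarrow> real) \<Rightarrow> real^'n^'n" where
  "diag_mat f = (\<chi> i j. if i = j then f i else 0)"

lemma diag_mat_mult: "diag_mat f ** diag_mat g = diag_mat (\<lambda>i. f i * g i)"
proof -
  have "(if i = k then f i else 0) * (if k = j then g k else 0)
      = (if k = i then (if i = j then f i * g i else 0) else (0::real))" for i j k
    by auto
  then show ?thesis unfolding diag_mat_def by (simp add: vec_eq_iff matrix_matrix_mult_def)
qed

lemma mat_1_eq_diag_mat: "mat 1 = diag_mat (\<lambda>i. 1)"
  unfolding diag_mat_def mat_def by simp

lemma diag_mat_add: "diag_mat f + diag_mat g = diag_mat (\<lambda>i. f i + g i)"
  unfolding diag_mat_def by (simp add: vec_eq_iff)

lemma diag_mat_diff: "diag_mat f - diag_mat g = diag_mat (\<lambda>i. f i - g i)"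
  unfolding diag_mat_def by (simp add: vec_eq_iff)

lemma scaleR_diag_mat: "r *\<^sub>R diag_mat f = diag_mat (\<lambda>i. r * f i)"
  unfolding diag_mat_def by (simp add: vec_eq_iff)

lemma trace_diag_mat: "trace (diag_mat f) = (\<Sum>i\<in>UNIV. f i)"
  unfolding diag_mat_def trace_def by simp

lemma cheb_mat_diag_cos:
  "cheb_mat j (diag_mat (\<lambda>i. cos (th i))) = diag_mat (\<lambda>i. cos (real j * th i))"
proof -
  have "cheb_mat j (diag_mat (\<lambda>i. cos (th i))) = diag_mat (\<lambda>i. cos (real j * th i))
      \<and> cheb_mat (Suc j) (diag_mat (\<lambda>i. cos (th i))) = diag_mat (\<lambda>i. cos (real (Suc j) * th i))"
  proof (induction j)
    case 0
    then show ?case by (simp add: mat_1_eq_diag_mat)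
  next
    case (Suc k)
    have "cos (real (Suc (Suc k)) * x) = 2 * cos x * cos (real (Suc k) * x) - cos (real k * x)" for x
      using cos_times_cos[of x "real (Suc k) * x"] by (simp add: algebra_simps)
    then show ?case
      using Suc by (simp add: diag_mat_mult scaleR_diag_mat diag_mat_diff mult.assoc)
  qed
  then show ?thesis ..
qed

lemma matrix_diff_ldistrib: "(A::real^'n^'m) ** (B - C) = A ** B - A ** C"
  by (simp add: vec_eq_iff matrix_matrix_mult_def right_diff_distrib sum_subtractf)

lemma matrix_diff_rdistrib: "((B::real^'n^'m) - C) ** A = B ** A - C ** A"
  by (simp add: vec_eq_iff matrix_matrix_mult_def left_diff_distrib sum_subtractf)

lemma matrix_add_rdistrib: "((B::real^'n^'m) + C) ** A = B ** A + C ** A"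
  by (simp add: vec_eq_iff matrix_matrix_mult_def distrib_right sum.distrib)

lemma cheb_mat_similar:
  fixes X Y D :: "real^'n^'n"
  assumes "Y ** X = mat 1"
  shows "cheb_mat j (X ** D ** Y) = X ** cheb_mat j D ** Y"
proof -
  have XY: "X ** Y = mat 1" using assms matrix_left_right_inverse by auto
  have "cheb_mat j (X ** D ** Y) = X ** cheb_mat j D ** Y
      \<and> cheb_mat (Suc j) (X ** D ** Y) = X ** cheb_mat (Suc j) D ** Y"
  proof (induction j)
    case 0
    then show ?case by (simp add: matrix_mul_assoc XY)
  next
    case (Suc k)
    have "(X ** D ** Y) ** (X ** cheb_mat (Suc k) D ** Y) = X ** (D ** cheb_mat (Suc k) D) ** Y"
      by (simp add: matrix_mul_assoc) (simp add: matrix_mul_assoc[symmetric] assms)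
    then have "cheb_mat (Suc (Suc k)) (X ** D ** Y)
        = X ** (2 *\<^sub>R (D ** cheb_mat (Suc k) D) - cheb_mat k D) ** Y"
      using Suc by (simp add: matrix_diff_ldistrib matrix_diff_rdistrib matrix_scalar_ac
          scalar_matrix_assoc[symmetric])
    then show ?case using Suc by simp
  qed
  then show ?thesis ..
qed

lemma trace_similar:
  assumes "Y ** X = mat 1"
  shows "trace (X ** M ** Y) = trace (M::real^'n^'n)"
  using trace_mul_sym[of "X ** M" Y] by (simp add: matrix_mul_assoc assms)

lemma trace_scaleR: "trace (r *\<^sub>R (A::real^'n^'n)) = r * trace A"
  unfolding trace_def by (simp add: sum_distrib_left)

lemma trace_sum: "trace (\<Sum>i\<in>S. (F i::real^'n^'n)) = (\<Sum>i\<in>S. trace (F i))"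
  by (induction S rule: infinite_finite_induct) (auto simp: trace_add trace_0[unfolded mat_0])

lemma trace_psi_mat_similar_diag:
  fixes X Y :: "real^'n^'n"
  assumes "Y ** X = mat 1"
  shows "trace (psi_mat cmin cmax d (X ** diag_mat (\<lambda>i. cos (th i)) ** Y))
    = (\<Sum>i\<in>UNIV. \<Sum>j=0..d. rho j d * eta cmin cmax j * cos (real j * th i))"
proof -
  have "trace (psi_mat cmin cmax d (X ** diag_mat (\<lambda>i. cos (th i)) ** Y))
      = (\<Sum>j=0..d. rho j d * eta cmin cmax j * (\<Sum>i\<in>UNIV. cos (real j * th i)))"
    unfolding psi_mat_def trace_sum trace_scaleR cheb_mat_similar[OF assms] trace_similar[OF assms]
      cheb_mat_diag_cos trace_diag_mat ..
  also have "\<dots> = (\<Sum>i\<in>UNIV. \<Sum>j=0..d. rho j d * eta cmin cmax j * cos (real j * th i))"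
    by (simp add: sum_distrib_left) (rule sum.swap)
  finally show ?thesis .
qed

lemma trace_outer_mult: "trace (outer (column i X) ** H) = (transpose X ** H ** X) $ i $ i"
proof -
  have "trace (outer (column i X) ** H) = (\<Sum>a\<in>UNIV. \<Sum>b\<in>UNIV. X$a$i * X$b$i * H$b$a)"
    unfolding trace_def outer_def matrix_matrix_mult_def column_def by simp
  also have "\<dots> = (\<Sum>a\<in>UNIV. \<Sum>b\<in>UNIV. X$b$i * H$b$a * X$a$i)"
    by (simp only: mult_ac)
  also have "\<dots> = (transpose X ** H ** X) $ i $ i"
    unfolding matrix_matrix_mult_def transpose_def by (simp add: sum_distrib_right)
  finally show ?thesis .
qed

lemma trace_PS_mat:
  assumes "transpose X ** H ** X = mat 1"
  shows "trace (PS_mat X H c cmin cmax)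
    = (\<Sum>i\<in>UNIV. if cmin < c i \<and> c i < cmax then 1 else if c i = cmin \<or> c i = cmax then 1/2 else 0)"
proof -
  have "trace (PS_mat X H c cmin cmax)
      = real (card {i. cmin < c i \<and> c i < cmax}) + 1/2 * real (card {i. c i = cmin \<or> c i = cmax})"
    unfolding PS_mat_def by (simp add: trace_add trace_sum trace_scaleR trace_outer_mult assms mat_def)
  also have "\<dots> = (\<Sum>i\<in>UNIV. if cmin < c i \<and> c i < cmax then 1 else if c i = cmin \<or> c i = cmax then 1/2 else 0)"
  proof -
    have "{i. (cmin < c i \<longrightarrow> \<not> c i < cmax) \<and> (c i = cmin \<or> c i = cmax)} = {i. c i = cmin \<or> c i = cmax}"
      by auto
    then show ?thesis by (simp add: sum.If_cases Int_def)
  qed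
  finally show ?thesis .
qed

lemma congruence_of_orthogonal_factor:
  fixes U :: "real^'m^'m" and A Sig :: "real^'n^'m" and X :: "real^'n^'n"
  assumes "orthogonal_matrix U" "transpose U ** A ** X = Sig"
  shows "transpose X ** (transpose A ** A) ** X = transpose Sig ** Sig"
proof -
  have "transpose Sig ** Sig = (transpose X ** transpose A ** U) ** (transpose U ** A ** X)"
    unfolding assms(2)[symmetric] by (simp add: matrix_transpose_mul matrix_mul_assoc)
  also have "\<dots> = transpose X ** transpose A ** (U ** transpose U) ** A ** X"
    by (simp only: matrix_mul_assoc)
  finally show ?thesis using assms(1) unfolding orthogonal_matrix_def by (simp add: matrix_mul_assoc)
qed

lemma matrix_inv_unique:
  fixes A B :: "'a::semiring_1^'n^'n"
  assumes "A ** B = mat 1" "B ** A = mat 1"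
  shows "matrix_inv A = B"
  unfolding matrix_inv_def
proof (rule some_equality)
  fix B' assume "A ** B' = mat 1 \<and> B' ** A = mat 1"
  then have "B' ** A = mat 1" by simp
  have "B' = B' ** (A ** B)" using assms by simp
  also have "\<dots> = B" by (simp add: matrix_mul_assoc \<open>B' ** A = mat 1\<close>)
  finally show "B' = B" .
qed (use assms in simp)

lemma matrix_inv_mult:
  assumes "invertible X"
  shows "X ** matrix_inv X = mat 1" "matrix_inv X ** X = mat 1"
proof -
  obtain X' where "X ** X' = mat 1 \<and> X' ** X = mat 1" using assms invertible_def by blast
  then have "X ** matrix_inv X = mat 1 \<and> matrix_inv X ** X = mat 1"
    unfolding matrix_inv_def by (rule someI)
  then show "X ** matrix_inv X = mat 1" "matrix_inv X ** X = mat 1" by auto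
qed

lemma simultaneous_congruence_diag:
  fixes X P Q :: "real^'n^'n"
  assumes "invertible X"
    and XP: "transpose X ** P ** X = diag_mat p" and XQ: "transpose X ** Q ** X = diag_mat q"
    and sum_one: "\<And>i. p i + q i = 1"
  shows "transpose X ** (P + Q) ** X = mat 1"
    and "matrix_inv (P + Q) ** (P - Q) = X ** diag_mat (\<lambda>i. p i - q i) ** matrix_inv X"
proof -
  define Y where "Y = matrix_inv X"
  have XY: "X ** Y = mat 1" and YX: "Y ** X = mat 1"
    using matrix_inv_mult[OF assms(1)] unfolding Y_def by auto
  have tYX: "transpose Y ** transpose X = mat 1"
    using XY by (metis matrix_transpose_mul transpose_mat)
  show XHX: "transpose X ** (P + Q) ** X = mat 1"
    unfolding matrix_add_ldistrib matrix_add_rdistrib XP XQ diag_mat_add sum_one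
    by (simp add: mat_1_eq_diag_mat)
  have "(P + Q) ** X = transpose Y"
    using arg_cong[OF XHX, of "\<lambda>M. transpose Y ** M"] by (simp add: matrix_mul_assoc tYX)
  then have "(P + Q) ** (X ** transpose X) = mat 1"
    by (simp add: matrix_mul_assoc tYX)
  moreover have "transpose X ** (P + Q) = Y"
    using arg_cong[OF XHX, of "\<lambda>M. M ** Y"] by (simp add: matrix_mul_assoc[symmetric] XY)
  then have "(X ** transpose X) ** (P + Q) = mat 1"
    by (simp add: matrix_mul_assoc[symmetric] XY)
  ultimately have inv: "matrix_inv (P + Q) = X ** transpose X" by (rule matrix_inv_unique)
  have "matrix_inv (P + Q) ** (P - Q) = X ** (transpose X ** (P - Q) ** X) ** Y"
    unfolding inv by (simp add: matrix_mul_assoc[symmetric] XY)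
  then show "matrix_inv (P + Q) ** (P - Q) = X ** diag_mat (\<lambda>i. p i - q i) ** Y"
    by (simp add: matrix_diff_ldistrib matrix_diff_rdistrib XP XQ diag_mat_diff)
qed

lemma gsvd_similar_diag:
  fixes A :: "real^'n^'m1" and B :: "real^'n^'m2"
    and U :: "real^'m1^'m1" and V :: "real^'m2^'m2" and X :: "real^'n^'n"
    and SigA :: "real^'n^'m1" and SigB :: "real^'n^'m2" and c s :: "'n \<Rightarrow> real"
  assumes "orthogonal_matrix U" "orthogonal_matrix V" "invertible X"
    and "transpose U ** A ** X = SigA" "transpose V ** B ** X = SigB"
    and "transpose SigA ** SigA = (\<chi> i j. if i = j then (c i)^2 else 0)"
    and "transpose SigB ** SigB = (\<chi> i j. if i = j then (s i)^2 else 0)"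
    and cs: "\<And>i. (c i)^2 + (s i)^2 = 1" and c01: "\<And>i. 0 \<le> c i \<and> c i \<le> 1"
  shows "transpose X ** (transpose A ** A + transpose B ** B) ** X = mat 1"
    and "matrix_inv (transpose A ** A + transpose B ** B) ** (transpose A ** A - transpose B ** B)
      = X ** diag_mat (\<lambda>i. cos (theta (c i))) ** matrix_inv X"
proof -
  have XAX: "transpose X ** (transpose A ** A) ** X = diag_mat (\<lambda>i. (c i)^2)"
    and XBX: "transpose X ** (transpose B ** B) ** X = diag_mat (\<lambda>i. (s i)^2)"
    using congruence_of_orthogonal_factor[OF assms(1,4)] congruence_of_orthogonal_factor[OF assms(2,5)]
      assms(6,7) unfolding diag_mat_def by simp_all
  have "(c i)^2 - (s i)^2 = cos (theta (c i))" for i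
    using cs[of i] cos_theta[of "c i"] c01[of i] unfolding lmap_def by simp
  then show "transpose X ** (transpose A ** A + transpose B ** B) ** X = mat 1"
    and "matrix_inv (transpose A ** A + transpose B ** B) ** (transpose A ** A - transpose B ** B)
      = X ** diag_mat (\<lambda>i. cos (theta (c i))) ** matrix_inv X"
    using simultaneous_congruence_diag[OF assms(3) XAX XBX cs] by simp_all
qed

lemma trace_PS_mat_psi_mat_diff:
  fixes X Y H :: "real^'n^'n" and c :: "'n \<Rightarrow> real"
  assumes XHX: "transpose X ** H ** X = mat 1" and YX: "Y ** X = mat 1"
    and c01: "\<And>i. 0 \<le> c i \<and> c i \<le> 1" and interval: "0 \<le> cmin" "cmin \<le> cmax" "cmax \<le> 1"
    and gap_pos: "delta_min c cmin cmax > 0"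
  shows "\<bar>trace (PS_mat X H c cmin cmax)
          - trace (psi_mat cmin cmax d (X ** diag_mat (\<lambda>i. cos (theta (c i))) ** Y))\<bar>
    \<le> real CARD('n) * pi^6 / (2 * (real d + 2)^3 * (delta_min c cmin cmax)^4)"
proof -
  define err where "err i = (if cmin < c i \<and> c i < cmax then 1 else 0)
      - (\<Sum>j=0..d. rho j d * eta cmin cmax j * cos (real j * theta (c i)))" for i
  have gaps: "delta_min c cmin cmax \<le> \<bar>theta (c i) - theta cmin\<bar>"
    "delta_min c cmin cmax \<le> \<bar>theta (c i) - theta cmax\<bar>" for i
    using delta_min_le_angle_gaps[where c = c, OF c01 interval, of i] by auto
  then have "c i \<noteq> cmin" "c i \<noteq> cmax" for i
    using gap_pos by (metis abs_zero diff_self not_le)+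
  then have "(\<Sum>i\<in>UNIV. if cmin < c i \<and> c i < cmax then 1 else if c i = cmin \<or> c i = cmax then 1/2 else 0)
      = (\<Sum>i\<in>UNIV. if cmin < c i \<and> c i < cmax then 1 else (0::real))"
    by (intro sum.cong) auto
  then have "\<bar>trace (PS_mat X H c cmin cmax)
          - trace (psi_mat cmin cmax d (X ** diag_mat (\<lambda>i. cos (theta (c i))) ** Y))\<bar>
      = \<bar>\<Sum>i\<in>UNIV. err i\<bar>"
    unfolding trace_PS_mat[OF XHX] trace_psi_mat_similar_diag[OF YX] err_def
    by (simp add: sum_subtractf)
  also have "\<dots> \<le> (\<Sum>i\<in>(UNIV::'n set). pi^6 / (2 * (real d + 2)^3 * (delta_min c cmin cmax)^4))"
    unfolding err_def
    by (intro order_trans[OF sum_abs] sum_mono jackson_series_pointwise_error)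
      (use c01 interval gap_pos gaps in auto)
  finally show ?thesis by simp
qed

theorem theorem3p4:
  fixes A :: "real^'n^'m1" and B :: "real^'n^'m2"
    and U :: "real^'m1^'m1" and V :: "real^'m2^'m2" and X :: "real^'n^'n"
    and SigA :: "real^'n^'m1" and SigB :: "real^'n^'m2"
    and c s :: "'n \<Rightarrow> real" and cmin cmax :: real and d :: nat
  assumes dims: "CARD('m1) + CARD('m2) \<ge> CARD('n)"
    and fullrank: "\<forall>x. A *v x = 0 \<and> B *v x = 0 \<longrightarrow> x = 0"
    and U_orth: "orthogonal_matrix U" and V_orth: "orthogonal_matrix V"
    and X_inv: "invertible X"
    and gsvdA: "transpose U ** A ** X = SigA"
    and gsvdB: "transpose V ** B ** X = SigB"
    and SigA_diag: "transpose SigA ** SigA = (\<chi> i j. if i = j then (c i)^2 else 0)"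
    and SigB_diag: "transpose SigB ** SigB = (\<chi> i j. if i = j then (s i)^2 else 0)"
    and cs_nonneg: "\<forall>i. c i \<ge> 0 \<and> s i \<ge> 0"
    and cs_sum: "\<forall>i. (c i)^2 + (s i)^2 = 1"
    and interval: "0 \<le> cmin" "cmin \<le> cmax" "cmax \<le> 1"
    and gap_pos: "delta_min c cmin cmax > 0"
  shows
    "let H = transpose A ** A + transpose B ** B;
         S = matrix_inv H ** (transpose A ** A - transpose B ** B);
         PS = PS_mat X H c cmin cmax;
         P = psi_mat cmin cmax d S
     in \<bar>trace PS - trace P\<bar>
          \<le> real CARD('n) * pi^6 / (2 * (real d + 2)^3 * (delta_min c cmin cmax)^4)"
proof -
  have c01: "0 \<le> c i \<and> c i \<le> 1" for i
  proof -
    have "(c i)^2 \<le> 1" using cs_sum by (metis le_add_same_cancel1 zero_le_power2)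
    then show ?thesis using cs_nonneg by (simp add: power_le_one_iff)
  qed
  have XHX: "transpose X ** (transpose A ** A + transpose B ** B) ** X = mat 1"
    and S_diag: "matrix_inv (transpose A ** A + transpose B ** B) ** (transpose A ** A - transpose B ** B)
      = X ** diag_mat (\<lambda>i. cos (theta (c i))) ** matrix_inv X"
    using gsvd_similar_diag[OF U_orth V_orth X_inv gsvdA gsvdB SigA_diag SigB_diag] cs_sum c01 by auto
  show ?thesis
    unfolding Let_def S_diag
    using trace_PS_mat_psi_mat_diff[OF XHX matrix_inv_mult(2)[OF X_inv] c01 interval gap_pos] .
qed

end
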